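(* Let $m,n\in\mathbb{N}$, let $\lambda_{\ell}>0$ for $1\le\ell\le m$, and let $\phi_{j,\ell}\in(0,\pi/2)$ for $1\le j\le n$, $1\le\ell\le m$. Then the $n\times n$ matrix \[ \left(\frac{1}{\prod_{\ell=1}^{m}\sin^{\lambda_{\ell}}(\phi_{j,\ell}+\phi_{k,\ell})}\right)_{j,k=1}^{n} \] is positive semidefinite.
   Context: A real symmetric (or complex) matrix $A=(a_{j,k})$ is positive semidefinite if $\sum_{j,k}a_{j,k}z_j\overline{z_k}\ge0$ for all complex $z_j$. *)

theory Defs
  imports "HOL-Analysis.Analysis" "HOL-Library.Complex_Order"
begin

text \<open>An n x n real matrix, given as a function on indices 1..n, is positive
  semidefinite if the Hermitian form sum_{j,k} a_{j,k} z_j conj(z_k) is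
  nonnegative (in the complex order, i.e. real and >= 0) for all complex z.\<close>
definition psd_matrix :: "nat \<Rightarrow> (nat \<Rightarrow> nat \<Rightarrow> real) \<Rightarrow> bool" where
  "psd_matrix n A \<longleftrightarrow>
     (\<forall>z :: nat \<Rightarrow> complex.
        (\<Sum>j=1..n. \<Sum>k=1..n. complex_of_real (A j k) * z j * cnj (z k)) \<ge> 0)"

end

theory Submission
  imports Defs "HOL-Analysis.Generalised_Binomial_Theorem"
begin

text \<open>Writing \<open>a = pi/4 - x\<close>, \<open>b = pi/4 - y\<close>, one has
  \<open>sin (x + y) = cos a * cos b * (1 - tan a * tan b)\<close> with \<open>\<bar>tan a\<bar>, \<bar>tan b\<bar> < 1\<close>,
  so the binomial series gives
  \<open>sin (x + y) powr -\<lambda> = (\<Sum>i. pochhammer \<lambda> i / fact i * u i x * u i y)\<close> with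
  \<open>u i x = cos a powr -\<lambda> * tan a ^ i\<close>. The coefficients are nonnegative, so each factor
  of the product is a convergent nonnegative combination of rank-one kernels, and
  Hadamard multiplication by such a kernel preserves positive semidefiniteness.\<close>

lemma psd_matrix_const_one: "psd_matrix n (\<lambda>j k. 1)"
  unfolding psd_matrix_def
proof
  fix z :: "nat \<Rightarrow> complex"
  have "(\<Sum>j=1..n. \<Sum>k=1..n. complex_of_real 1 * z j * cnj (z k))
      = (\<Sum>j=1..n. z j) * cnj (\<Sum>j=1..n. z j)"
    by (simp add: sum_distrib_right sum_distrib_left) (rule sum.swap)
  also have "\<dots> \<ge> 0"
    using complex_mult_cnj [of "\<Sum>j=1..n. z j"] by (simp only: less_eq_complex_def) simp
  finally show "(\<Sum>j=1..n. \<Sum>k=1..n. complex_of_real 1 * z j * cnj (z k)) \<ge> 0" .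
qed

lemma sums_complex_nonneg:
  fixes s :: "nat \<Rightarrow> complex"
  assumes "s sums L" "\<And>i. s i \<ge> 0"
  shows "L \<ge> 0"
proof -
  have Re: "(\<lambda>i. Re (s i)) sums Re L" and Im: "(\<lambda>i. Im (s i)) sums Im L"
    using assms(1) by (simp_all add: sums_complex_iff)
  have Re_nonneg: "Re (s i) \<ge> 0" and Im_zero: "Im (s i) = 0" for i
    using assms(2) by (auto simp: less_eq_complex_def)
  have "Re L \<ge> 0"
    using Re_nonneg by (intro sums_le[OF _ sums_zero Re])
  moreover have "Im L = 0"
    using Im Im_zero sums_unique2[OF sums_zero] by simp
  ultimately show ?thesis
    by (simp add: less_eq_complex_def)
qed

text \<open>Schur's product theorem for a kernel \<open>F j k = (\<Sum>i. c i * u i j * u i k)\<close> with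
  \<open>c i \<ge> 0\<close>: the quadratic form of \<open>A \<circ> F\<close> at \<open>z\<close> is the series of the forms of \<open>A\<close>
  at \<open>u i \<cdot> z\<close>, weighted by \<open>c i\<close>.\<close>

lemma psd_matrix_hadamard_series:
  assumes A: "psd_matrix n A" and c: "\<And>i. c i \<ge> (0::real)"
    and F: "\<And>j k. j \<in> {1..n} \<Longrightarrow> k \<in> {1..n} \<Longrightarrow> (\<lambda>i. c i * u i j * u i k) sums F j k"
  shows "psd_matrix n (\<lambda>j k. A j k * F j k)"
  unfolding psd_matrix_def
proof
  fix z :: "nat \<Rightarrow> complex"
  define Q where "Q i = (\<Sum>j=1..n. \<Sum>k=1..n.
      complex_of_real (A j k) * (complex_of_real (u i j) * z j) * cnj (complex_of_real (u i k) * z k))"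
    for i
  have Q_nonneg: "Q i \<ge> 0" for i
    unfolding Q_def using A unfolding psd_matrix_def by (rule spec)
  have "(\<lambda>i. \<Sum>j=1..n. \<Sum>k=1..n.
          complex_of_real (c i * u i j * u i k) * (complex_of_real (A j k) * z j * cnj (z k)))
        sums (\<Sum>j=1..n. \<Sum>k=1..n. complex_of_real (F j k) * (complex_of_real (A j k) * z j * cnj (z k)))"
    by (intro sums_sum sums_mult2 sums_of_real F) auto
  then have "(\<lambda>i. complex_of_real (c i) * Q i)
      sums (\<Sum>j=1..n. \<Sum>k=1..n. complex_of_real (A j k * F j k) * z j * cnj (z k))"
    unfolding Q_def by (simp add: sum_distrib_left mult_ac)
  moreover have "complex_of_real (c i) * Q i \<ge> 0" for i
    using c[of i] Q_nonneg[of i] by (auto simp: less_eq_complex_def)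
  ultimately show "(\<Sum>j=1..n. \<Sum>k=1..n. complex_of_real (A j k * F j k) * z j * cnj (z k)) \<ge> 0"
    by (rule sums_complex_nonneg)
qed

lemma psd_matrix_hadamard_prod:
  fixes M :: nat
  assumes "\<And>l A. l \<in> {1..M} \<Longrightarrow> psd_matrix n A \<Longrightarrow> psd_matrix n (\<lambda>j k. A j k * K l j k)"
  shows "psd_matrix n (\<lambda>j k. \<Prod>l=1..M. K l j k)"
  using assms
proof (induction M)
  case 0
  then show ?case
    using psd_matrix_const_one by simp
next
  case (Suc M)
  then have "psd_matrix n (\<lambda>j k. (\<Prod>l=1..M. K l j k) * K (Suc M) j k)"
    by simp
  then show ?case
    by (simp add: prod.nat_ivl_Suc')
qed

lemma inverse_powr_series:
  fixes lam p :: real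
  assumes "\<bar>p\<bar> < 1"
  shows "(\<lambda>i. pochhammer lam i / fact i * p ^ i) sums (1 - p) powr (- lam)"
proof -
  have "(\<lambda>i. ((- lam) gchoose i) * (- p) ^ i) sums (1 + - p) powr (- lam)"
    using assms by (intro gen_binomial_real) simp
  moreover have "((- lam) gchoose i) * (- p) ^ i = pochhammer lam i / fact i * p ^ i" for i
    by (simp add: gbinomial_pochhammer power_mult_distrib[symmetric])
  ultimately show ?thesis
    by simp
qed

lemma inverse_sin_add_powr_series:
  fixes lam x y :: real
  defines "u \<equiv> \<lambda>i x. cos (pi/4 - x) powr (- lam) * tan (pi/4 - x) ^ i"
  assumes x: "x \<in> {0<..<pi/2}" and y: "y \<in> {0<..<pi/2}"
  shows "(\<lambda>i. pochhammer lam i / fact i * u i x * u i y) sums (1 / sin (x + y) powr lam)"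
proof -
  define a b where "a = pi/4 - x" and "b = pi/4 - y"
  have "\<bar>a\<bar> < pi/4" "\<bar>b\<bar> < pi/4"
    unfolding a_def b_def abs_less_iff using x y by auto
  then have tan_a: "\<bar>tan a\<bar> < 1" and tan_b: "\<bar>tan b\<bar> < 1" and cos_a: "cos a > 0" and cos_b: "cos b > 0"
    by (auto intro!: tan_bound_pi2 cos_gt_zero_pi)
  have tan_prod: "\<bar>tan a * tan b\<bar> < 1"
    using abs_mult_less [OF tan_a tan_b] by (simp add: abs_mult)
  have "x + y = pi/2 - (a + b)"
    by (simp add: a_def b_def)
  then have "sin (x + y) = cos (a + b)"
    by (simp add: sin_cos_eq)
  also have "\<dots> = cos a * cos b * (1 - tan a * tan b)"
    using cos_a cos_b by (simp add: lemma_tan_add1)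
  finally have "1 / sin (x + y) powr lam
      = cos a powr (- lam) * cos b powr (- lam) * (1 - tan a * tan b) powr (- lam)"
    using cos_a cos_b tan_prod by (simp add: powr_mult powr_minus divide_simps)
  moreover have "(\<lambda>i. cos a powr (- lam) * cos b powr (- lam) * (pochhammer lam i / fact i * (tan a * tan b) ^ i))
      sums (cos a powr (- lam) * cos b powr (- lam) * (1 - tan a * tan b) powr (- lam))"
    by (intro sums_mult inverse_powr_series tan_prod)
  ultimately show ?thesis
    by (simp add: u_def a_def [symmetric] b_def [symmetric] power_mult_distrib mult_ac)
qed

theorem mainTheorem5:
  fixes m n :: nat
    and lam :: "nat \<Rightarrow> real"
    and phi :: "nat \<Rightarrow> nat \<Rightarrow> real"
  assumes lam_pos: "\<And>l. 1 \<le> l \<Longrightarrow> l \<le> m \<Longrightarrow> lam l > 0"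
    and phi_range: "\<And>j l. 1 \<le> j \<Longrightarrow> j \<le> n \<Longrightarrow> 1 \<le> l \<Longrightarrow> l \<le> m \<Longrightarrow>
                       phi j l \<in> {0<..<pi/2}"
  shows "psd_matrix n
           (\<lambda>j k. 1 / (\<Prod>l=1..m. sin (phi j l + phi k l) powr lam l))"
proof -
  have "psd_matrix n (\<lambda>j k. \<Prod>l=1..m. 1 / sin (phi j l + phi k l) powr lam l)"
  proof (rule psd_matrix_hadamard_prod, rule psd_matrix_hadamard_series)
    fix l A assume l: "l \<in> {1..m}"
    show "pochhammer (lam l) i / fact i \<ge> 0" for i
      using lam_pos l by (intro divide_nonneg_pos pochhammer_nonneg) auto
    show "(\<lambda>i. pochhammer (lam l) i / fact i
              * (cos (pi/4 - phi j l) powr (- lam l) * tan (pi/4 - phi j l) ^ i)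
              * (cos (pi/4 - phi k l) powr (- lam l) * tan (pi/4 - phi k l) ^ i))
            sums (1 / sin (phi j l + phi k l) powr lam l)"
      if "j \<in> {1..n}" "k \<in> {1..n}" for j k
      using l that by (intro inverse_sin_add_powr_series phi_range) auto
  qed
  then show ?thesis
    by (simp add: prod_dividef)
qed

end
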